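(* Suppose $|\Omega| = |A| = 2$. Then ambiguous communication does not benefit the sender, i.e. $V_{\mathrm{amb}} \le V_{\mathrm{stat}}$.
   Context: Setting: $\Omega$ is a finite set of states, $A$ a finite set of receiver actions. Sender and receiver share a set of priors $P \subseteq \Delta(\Omega)$, nonempty, closed and convex; both have maxmin expected utility preferences. Payoffs are $u_s, u_r : A \times \Omega \to \mathbb{R}$ (arbitrary). A statistical experiment with finite message set $M$ is a map $\sigma: \Omega \to \Delta(M)$, written $\sigma(m\mid\omega)$. A receiver strategy is $\tau: M \to \Delta(A)$, written $\tau(a\mid m)$. For $p \in P$ and $i \in \{s,r\}$, $u_i(p,\sigma,\tau) = \sum_{\omega,m,a} p(\omega)\sigma(m\mid\omega)\tau(a\mid m)u_i(a,\omega)$ and $u_i(\sigma,\tau) = \min_{p\in P} u_i(p,\sigma,\tau)$. An ambiguous experiment is a nonempty closed convex set $\Sigma$ of statistical experiments with a common finite message set $M$; $U_i(\Sigma,\tau) = \min_{\sigma \in \Sigma} u_i(\sigma,\tau)$. Best responses: $BR(\sigma) = \arg\max_{\tau} u_r(\sigma,\tau)$ and $BR(\Sigma) = \arg\max_{\tau} U_r(\Sigma,\tau)$, maximizing over all strategies $\tau: M \to \Delta(A)$. The sender's value with statistical experiments is $V_{\mathrm{stat}} = \sup\{u_s(\sigma,\tau) : M \text{ finite}, \sigma:\Omega\to\Delta(M), \tau \in BR(\sigma)\}$, and with ambiguous experiments is $V_{\mathrm{amb}} = \sup\{U_s(\Sigma,\tau) : M \text{ finite}, \Sigma \text{ ambiguous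 experiment with message set } M, \tau \in BR(\Sigma)\}$ (the sender selects both the experiment and the receiver's best response). Ambiguous communication benefits the sender if $V_{\mathrm{amb}} > V_{\mathrm{stat}}$. *)

theory Defs
  imports "HOL-Analysis.Analysis"
begin

(* States: finite type 'w; actions: finite type 'a; messages: finite sets M of naturals. *)

definition is_prior :: "('w::finite \<Rightarrow> real) \<Rightarrow> bool" where
  "is_prior p \<longleftrightarrow> (\<forall>w. p w \<ge> 0) \<and> (\<Sum>w\<in>UNIV. p w) = 1"

definition fconvex :: "('x \<Rightarrow> real) set \<Rightarrow> bool" where
  "fconvex S \<longleftrightarrow> (\<forall>f\<in>S. \<forall>g\<in>S. \<forall>t::real. 0 \<le> t \<and> t \<le> 1 \<longrightarrow>
      (\<lambda>x. t * f x + (1 - t) * g x) \<in> S)"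

definition fconvex2 :: "('x \<Rightarrow> 'y \<Rightarrow> real) set \<Rightarrow> bool" where
  "fconvex2 S \<longleftrightarrow> (\<forall>f\<in>S. \<forall>g\<in>S. \<forall>t::real. 0 \<le> t \<and> t \<le> 1 \<longrightarrow>
      (\<lambda>x y. t * f x y + (1 - t) * g x y) \<in> S)"

definition prior_set :: "('w::finite \<Rightarrow> real) set \<Rightarrow> bool" where
  "prior_set P \<longleftrightarrow> P \<noteq> {} \<and> closed P \<and> fconvex P \<and> (\<forall>p\<in>P. is_prior p)"

definition is_exp :: "nat set \<Rightarrow> ('w::finite \<Rightarrow> nat \<Rightarrow> real) \<Rightarrow> bool" where
  "is_exp M \<sigma> \<longleftrightarrow> finite M \<and> (\<forall>w m. \<sigma> w m \<ge> 0) \<and> (\<forall>w m. m \<notin> M \<longrightarrow> \<sigma> w m = 0)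
      \<and> (\<forall>w. (\<Sum>m\<in>M. \<sigma> w m) = 1)"

definition is_strat :: "nat set \<Rightarrow> (nat \<Rightarrow> 'a::finite \<Rightarrow> real) \<Rightarrow> bool" where
  "is_strat M \<tau> \<longleftrightarrow> (\<forall>m\<in>M. (\<forall>a. \<tau> m a \<ge> 0) \<and> (\<Sum>a\<in>UNIV. \<tau> m a) = 1)"

definition eu :: "('a::finite \<Rightarrow> 'w::finite \<Rightarrow> real) \<Rightarrow> ('w \<Rightarrow> real) \<Rightarrow> nat set
     \<Rightarrow> ('w \<Rightarrow> nat \<Rightarrow> real) \<Rightarrow> (nat \<Rightarrow> 'a \<Rightarrow> real) \<Rightarrow> real" where
  "eu u p M \<sigma> \<tau> = (\<Sum>w\<in>UNIV. \<Sum>m\<in>M. \<Sum>a\<in>UNIV. p w * \<sigma> w m * \<tau> m a * u a w)"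

definition mu :: "('w::finite \<Rightarrow> real) set \<Rightarrow> ('a::finite \<Rightarrow> 'w \<Rightarrow> real) \<Rightarrow> nat set
     \<Rightarrow> ('w \<Rightarrow> nat \<Rightarrow> real) \<Rightarrow> (nat \<Rightarrow> 'a \<Rightarrow> real) \<Rightarrow> real" where
  "mu P u M \<sigma> \<tau> = (INF p\<in>P. eu u p M \<sigma> \<tau>)"

definition U_amb :: "('w::finite \<Rightarrow> real) set \<Rightarrow> ('a::finite \<Rightarrow> 'w \<Rightarrow> real) \<Rightarrow> nat set
     \<Rightarrow> ('w \<Rightarrow> nat \<Rightarrow> real) set \<Rightarrow> (nat \<Rightarrow> 'a \<Rightarrow> real) \<Rightarrow> real" where
  "U_amb P u M \<Sigma> \<tau> = (INF \<sigma>\<in>\<Sigma>. mu P u M \<sigma> \<tau>)"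

definition amb_exp :: "nat set \<Rightarrow> ('w::finite \<Rightarrow> nat \<Rightarrow> real) set \<Rightarrow> bool" where
  "amb_exp M \<Sigma> \<longleftrightarrow> \<Sigma> \<noteq> {} \<and> closed \<Sigma> \<and> fconvex2 \<Sigma> \<and> (\<forall>\<sigma>\<in>\<Sigma>. is_exp M \<sigma>)"

definition BR_stat :: "('w::finite \<Rightarrow> real) set \<Rightarrow> ('a::finite \<Rightarrow> 'w \<Rightarrow> real) \<Rightarrow> nat set
     \<Rightarrow> ('w \<Rightarrow> nat \<Rightarrow> real) \<Rightarrow> (nat \<Rightarrow> 'a \<Rightarrow> real) set" where
  "BR_stat P ur M \<sigma> = {\<tau>. is_strat M \<tau> \<and>
      (\<forall>\<tau>'. is_strat M \<tau>' \<longrightarrow> mu P ur M \<sigma> \<tau>' \<le> mu P ur M \<sigma> \<tau>)}"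

definition BR_amb :: "('w::finite \<Rightarrow> real) set \<Rightarrow> ('a::finite \<Rightarrow> 'w \<Rightarrow> real) \<Rightarrow> nat set
     \<Rightarrow> ('w \<Rightarrow> nat \<Rightarrow> real) set \<Rightarrow> (nat \<Rightarrow> 'a \<Rightarrow> real) set" where
  "BR_amb P ur M \<Sigma> = {\<tau>. is_strat M \<tau> \<and>
      (\<forall>\<tau>'. is_strat M \<tau>' \<longrightarrow> U_amb P ur M \<Sigma> \<tau>' \<le> U_amb P ur M \<Sigma> \<tau>)}"

definition V_stat :: "('w::finite \<Rightarrow> real) set \<Rightarrow> ('a::finite \<Rightarrow> 'w \<Rightarrow> real)
     \<Rightarrow> ('a \<Rightarrow> 'w \<Rightarrow> real) \<Rightarrow> real" where
  "V_stat P us ur = Sup {mu P us M \<sigma> \<tau> | M \<sigma> \<tau>. finite M \<and> is_exp M \<sigma> \<and> \<tau> \<in> BR_stat P ur M \<sigma>}"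

definition V_amb :: "('w::finite \<Rightarrow> real) set \<Rightarrow> ('a::finite \<Rightarrow> 'w \<Rightarrow> real)
     \<Rightarrow> ('a \<Rightarrow> 'w \<Rightarrow> real) \<Rightarrow> real" where
  "V_amb P us ur = Sup {U_amb P us M \<Sigma> \<tau> | M \<Sigma> \<tau>. finite M \<and> amb_exp M \<Sigma> \<and> \<tau> \<in> BR_amb P ur M \<Sigma>}"

end

theory Submission
  imports Defs
begin

(*
  Everything the two players care about in a pair (experiment, strategy) is the point
  y = (P(a1 | w1), P(a1 | w2)) of the unit square, and since the priors form a closed interval of
  weights on w1, each maxmin payoff is the minimum of two affine functions of y.  Garbling the
  receiver's strategy (play a1 with probability a after a1 and b after a2) acts on y as
  y |-> a y + b (1 - y) componentwise.  For an ambiguous experiment with best response tau, the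
  closure K of the points induced by its members is compact and convex, and no garbling raises
  the infimum over K of the receiver's payoff.  Comparing first-order changes at minimisers of
  the two affine pieces over K, a two-dimensional theorem of the alternative produces a weight
  on the pieces and a point y of K at which no garbling is profitable.  The statistical
  experiment that recommends a1 with the probabilities y is then obeyed, and it gives the sender
  at least the infimum over K of the sender's payoff, which is the ambiguous payoff.
*)

lemma eventually_above_at_right:
  fixes r m d :: real
  assumes "r \<le> m" "r < m \<or> 0 < d"
  shows "\<forall>\<^sub>F \<epsilon> in at_right 0. r < m + \<epsilon> * d"
proof (cases "r < m")
  case True
  have "((\<lambda>\<epsilon>. m + \<epsilon> * d) \<longlongrightarrow> m + 0 * d) (at_right 0)"
    by (intro tendsto_intros)
  then show ?thesis using True by (simp add: order_tendstoD(1))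
next
  case False
  with assms have "r = m" "0 < d" by auto
  from eventually_at_right_less[of "0::real"] show ?thesis
    by eventually_elim (use \<open>r = m\<close> \<open>0 < d\<close> in simp)
qed

lemma min_affine_first_order:
  fixes m1 m2 d1 d2 \<eta> :: real
  assumes "0 < \<eta>"
    and le: "\<And>\<epsilon>. 0 < \<epsilon> \<Longrightarrow> \<epsilon> < \<eta> \<Longrightarrow> min (m1 + \<epsilon> * d1) (m2 + \<epsilon> * d2) \<le> min m1 m2"
  shows "(m1 \<le> m2 \<and> d1 \<le> 0) \<or> (m2 \<le> m1 \<and> d2 \<le> 0)"
proof (rule ccontr)
  assume "\<not> ?thesis"
  then have "\<forall>\<^sub>F \<epsilon> in at_right 0. min m1 m2 < m1 + \<epsilon> * d1"
    and "\<forall>\<^sub>F \<epsilon> in at_right 0. min m1 m2 < m2 + \<epsilon> * d2"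
    by (auto intro!: eventually_above_at_right)
  moreover have "\<forall>\<^sub>F \<epsilon> in at_right 0. \<epsilon> \<in> {0<..<\<eta>}"
    using \<open>0 < \<eta>\<close> by (rule eventually_at_right_real)
  ultimately have "\<forall>\<^sub>F \<epsilon> in at_right (0::real). False"
    by eventually_elim (use le in fastforce)
  then show False by simp
qed

lemma exists_mix_crossing:
  fixes \<alpha>1 \<beta>1 \<alpha>2 \<beta>2 :: real
  assumes "\<beta>2 \<le> 0" "0 < \<beta>1" "\<beta>2 * \<alpha>1 \<le> \<beta>1 * \<alpha>2"
  shows "\<exists>\<theta>\<in>{0..1}. 0 \<le> \<theta> * \<alpha>1 + (1 - \<theta>) * \<alpha>2 \<and> \<theta> * \<beta>1 + (1 - \<theta>) * \<beta>2 \<le> 0"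
proof
  define \<theta> where "\<theta> = - \<beta>2 / (\<beta>1 - \<beta>2)"
  have pos: "0 < \<beta>1 - \<beta>2" using assms by linarith
  then have \<theta>_mult: "\<theta> * (\<beta>1 - \<beta>2) = - \<beta>2" by (simp add: \<theta>_def)
  show "\<theta> \<in> {0..1}" using assms pos by (auto simp: \<theta>_def field_simps)
  have "\<theta> * \<beta>1 + (1 - \<theta>) * \<beta>2 = \<theta> * (\<beta>1 - \<beta>2) + \<beta>2" by (simp add: algebra_simps)
  then have \<beta>: "\<theta> * \<beta>1 + (1 - \<theta>) * \<beta>2 = 0" unfolding \<theta>_mult by simp
  have "(\<beta>1 - \<beta>2) * (\<theta> * \<alpha>1 + (1 - \<theta>) * \<alpha>2) = \<theta> * (\<beta>1 - \<beta>2) * (\<alpha>1 - \<alpha>2) + (\<beta>1 - \<beta>2) * \<alpha>2"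
    by (simp add: algebra_simps)
  also have "\<dots> = \<beta>1 * \<alpha>2 - \<beta>2 * \<alpha>1" unfolding \<theta>_mult by (simp add: algebra_simps)
  finally have "0 \<le> (\<beta>1 - \<beta>2) * (\<theta> * \<alpha>1 + (1 - \<theta>) * \<alpha>2)" using assms(3) by simp
  then have "0 \<le> \<theta> * \<alpha>1 + (1 - \<theta>) * \<alpha>2" using pos by (simp add: zero_le_mult_iff)
  with \<beta> show "0 \<le> \<theta> * \<alpha>1 + (1 - \<theta>) * \<alpha>2 \<and> \<theta> * \<beta>1 + (1 - \<theta>) * \<beta>2 \<le> 0" by simp
qed

lemma exists_mix_nonneg_nonpos:
  fixes \<alpha>1 \<beta>1 \<alpha>2 \<beta>2 :: real
  assumes alt: "\<And>s t. 0 \<le> s \<Longrightarrow> 0 \<le> t \<Longrightarrow> t * \<beta>1 \<le> s * \<alpha>1 \<or> t * \<beta>2 \<le> s * \<alpha>2"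
  shows "\<exists>\<theta>\<in>{0..1}. 0 \<le> \<theta> * \<alpha>1 + (1 - \<theta>) * \<alpha>2 \<and> \<theta> * \<beta>1 + (1 - \<theta>) * \<beta>2 \<le> 0"
proof -
  have \<alpha>: "0 \<le> \<alpha>1 \<or> 0 \<le> \<alpha>2" and \<beta>: "\<beta>1 \<le> 0 \<or> \<beta>2 \<le> 0"
    using alt[of 1 0] alt[of 0 1] by auto
  consider "0 \<le> \<alpha>1 \<and> \<beta>1 \<le> 0" | "0 \<le> \<alpha>2 \<and> \<beta>2 \<le> 0"
    | "\<beta>2 \<le> 0 \<and> 0 < \<beta>1 \<and> \<alpha>2 \<le> \<alpha>1" | "\<beta>1 \<le> 0 \<and> 0 < \<beta>2 \<and> \<alpha>1 \<le> \<alpha>2"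
    using \<alpha> \<beta> by linarith
  then show ?thesis
  proof cases
    case 1
    then show ?thesis by (intro bexI[of _ 1]) auto
  next
    case 2
    then show ?thesis by (intro bexI[of _ 0]) auto
  next
    case 3
    moreover have "\<beta>2 * \<alpha>1 \<le> \<beta>1 * \<alpha>2"
      using alt[of "\<beta>1 - \<beta>2" "\<alpha>1 - \<alpha>2"] 3 by (auto simp: algebra_simps)
    ultimately show ?thesis by (intro exists_mix_crossing) auto
  next
    case 4
    moreover have "\<beta>1 * \<alpha>2 \<le> \<beta>2 * \<alpha>1"
      using alt[of "\<beta>2 - \<beta>1" "\<alpha>2 - \<alpha>1"] 4 by (auto simp: algebra_simps)
    ultimately obtain \<theta> where "\<theta> \<in> {0..1}" "0 \<le> \<theta> * \<alpha>2 + (1 - \<theta>) * \<alpha>1" "\<theta> * \<beta>2 + (1 - \<theta>) * \<beta>1 \<le> 0"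
      using exists_mix_crossing[of \<beta>1 \<beta>2 \<alpha>2 \<alpha>1] by auto
    then show ?thesis by (intro bexI[of _ "1 - \<theta>"]) (auto simp: algebra_simps)
  qed
qed

lemma exists_eq_on_connected:
  fixes F G :: "'a::topological_space \<Rightarrow> real"
  assumes "connected K" "continuous_on K F" "continuous_on K G"
    and "x \<in> K" "y \<in> K" "F x \<le> G x" "G y \<le> F y"
  shows "\<exists>z\<in>K. F z = G z"
proof -
  have "connected ((\<lambda>z. F z - G z) ` K)"
    using assms(1-3) by (intro connected_continuous_image continuous_intros)
  moreover have "F x - G x \<in> (\<lambda>z. F z - G z) ` K" "F y - G y \<in> (\<lambda>z. F z - G z) ` K"
    using assms(4,5) by auto
  ultimately have "0 \<in> (\<lambda>z. F z - G z) ` K"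
    by (rule connectedD_interval) (use assms(6,7) in auto)
  then show ?thesis by auto
qed

lemma INF_closure_continuous:
  fixes f :: "'a::topological_space \<Rightarrow> real"
  assumes "continuous_on (closure S) f" "S \<noteq> {}" "bdd_below (f ` closure S)"
  shows "(INF x\<in>closure S. f x) = (INF x\<in>S. f x)"
proof (rule antisym)
  show "(INF x\<in>closure S. f x) \<le> (INF x\<in>S. f x)"
    using assms(2,3) closure_subset by (rule cINF_superset_mono) auto
  have "closure S \<subseteq> {x \<in> closure S. (INF x\<in>S. f x) \<le> f x}"
  proof (rule closure_minimal)
    show "S \<subseteq> {x \<in> closure S. (INF x\<in>S. f x) \<le> f x}"
      using bdd_below_mono[OF assms(3) image_mono[OF closure_subset]] closure_subset
      by (auto intro: cINF_lower)
    show "closed {x \<in> closure S. (INF x\<in>S. f x) \<le> f x}"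
      using assms(1) by (intro continuous_on_closed_Collect_le continuous_intros) auto
  qed
  then show "(INF x\<in>S. f x) \<le> (INF x\<in>closure S. f x)"
    using assms(2) by (intro cINF_greatest) auto
qed

lemma INF_affine_compact:
  fixes S :: "real set"
  assumes "compact S" "S \<noteq> {}"
  shows "(INF x\<in>S. c + x * d) = min (c + Inf S * d) (c + Sup S * d)"
proof -
  have bdd: "bdd_below S" "bdd_above S"
    using compact_imp_bounded[OF assms(1)] by (auto intro: bounded_imp_bdd_below bounded_imp_bdd_above)
  have mem: "Inf S \<in> S" "Sup S \<in> S"
    using assms bdd by (auto intro: closed_contains_Inf closed_contains_Sup compact_imp_closed)
  have lower: "min (c + Inf S * d) (c + Sup S * d) \<le> c + x * d" if "x \<in> S" for x
  proof (cases "0 \<le> d")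
    case True
    then show ?thesis using cInf_lower[OF that bdd(1)] by (simp add: min_le_iff_disj mult_right_mono)
  next
    case False
    then show ?thesis using cSup_upper[OF that bdd(2)] by (simp add: min_le_iff_disj mult_right_mono_neg)
  qed
  show ?thesis
  proof (rule antisym)
    have "bdd_below ((\<lambda>x. c + x * d) ` S)" using lower by (intro bdd_belowI2)
    then show "(INF x\<in>S. c + x * d) \<le> min (c + Inf S * d) (c + Sup S * d)"
      using cINF_lower mem by force
    show "min (c + Inf S * d) (c + Sup S * d) \<le> (INF x\<in>S. c + x * d)"
      using assms(2) lower by (rule cINF_greatest)
  qed
qed

(* A receiver deviation: play a1 with probability a where a1 was played and b where a2 was. *)
definition garble :: "real \<Rightarrow> real \<Rightarrow> real \<times> real \<Rightarrow> real \<times> real" where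
  "garble a b y = (a * fst y + b * (1 - fst y), a * snd y + b * (1 - snd y))"

abbreviation unit_square :: "(real \<times> real) set" where
  "unit_square \<equiv> {0..1} \<times> {0..1}"

definition obedient :: "(real \<times> real \<Rightarrow> real) \<Rightarrow> real \<times> real \<Rightarrow> bool" where
  "obedient f y \<longleftrightarrow> (\<forall>a\<in>{0..1}. \<forall>b\<in>{0..1}. f (garble a b y) \<le> f y)"

lemma linear_garble: "linear A \<Longrightarrow> A (garble a b y) = (a - b) * A y + b * A (1, 1)"
proof -
  assume "linear A"
  moreover have "garble a b y = (a - b) *\<^sub>R y + b *\<^sub>R (1, 1)"
    by (simp add: garble_def prod_eq_iff algebra_simps)
  ultimately show ?thesis by (simp add: linear_add linear_scale del: scaleR_Pair)
qed

lemma continuous_on_garble: "continuous_on S (garble a b)"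
  unfolding garble_def by (intro continuous_intros)

lemma mix_in_unit_interval:
  "a \<in> {0..1} \<Longrightarrow> b \<in> {0..1} \<Longrightarrow> x \<in> {0..1} \<Longrightarrow> a * x + b * (1 - x) \<in> {0..1::real}"
  using convex_bound_le[of a 1 b x "1 - x"] by (simp add: mult.commute)

lemma garble_unit_square:
  "y \<in> unit_square \<Longrightarrow> a \<in> {0..1} \<Longrightarrow> b \<in> {0..1} \<Longrightarrow> garble a b y \<in> unit_square"
  using mix_in_unit_interval[of a b "fst y"] mix_in_unit_interval[of a b "snd y"]
  by (auto simp: garble_def mem_Times_iff)

lemma garble_1_0 [simp]: "garble 1 0 y = y"
  by (simp add: garble_def)

lemma obedient_min_affine:
  assumes "linear A1" "linear A2" "\<theta> \<in> {0..1}"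
    and weighted: "\<theta> * (k1 + A1 y) + (1 - \<theta>) * (k2 + A2 y) \<le> min (k1 + A1 y) (k2 + A2 y)"
    and nonneg: "0 \<le> \<theta> * A1 y + (1 - \<theta>) * A2 y"
    and diag: "\<theta> * A1 (1, 1) + (1 - \<theta>) * A2 (1, 1) \<le> \<theta> * A1 y + (1 - \<theta>) * A2 y"
  shows "obedient (\<lambda>y. min (k1 + A1 y) (k2 + A2 y)) y"
  unfolding obedient_def
proof (intro ballI)
  fix a b :: real assume "a \<in> {0..1}" "b \<in> {0..1}"
  let ?L = "\<theta> * A1 y + (1 - \<theta>) * A2 y" and ?D = "\<theta> * A1 (1, 1) + (1 - \<theta>) * A2 (1, 1)"
  let ?F1 = "k1 + A1 (garble a b y)" and ?F2 = "k2 + A2 (garble a b y)"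
  have "min ?F1 ?F2 \<le> \<theta> * ?F1 + (1 - \<theta>) * ?F2"
    using \<open>\<theta> \<in> {0..1}\<close>
      mult_left_mono[of "min ?F1 ?F2" ?F1 \<theta>] mult_left_mono[of "min ?F1 ?F2" ?F2 "1 - \<theta>"]
    by (simp add: algebra_simps)
  also have "\<dots> = \<theta> * (k1 + A1 y) + (1 - \<theta>) * (k2 + A2 y) + (a - 1) * ?L + b * (?D - ?L)"
    using assms(1,2) by (simp add: linear_garble algebra_simps)
  also have "\<dots> \<le> \<theta> * (k1 + A1 y) + (1 - \<theta>) * (k2 + A2 y)"
  proof -
    have "(a - 1) * ?L \<le> 0" using \<open>a \<in> {0..1}\<close> nonneg by (simp add: mult_nonpos_nonneg)
    moreover have "b * (?D - ?L) \<le> 0" using \<open>b \<in> {0..1}\<close> diag by (simp add: mult_nonneg_nonpos)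
    ultimately show ?thesis by linarith
  qed
  finally show "min ?F1 ?F2 \<le> min (k1 + A1 y) (k2 + A2 y)" using weighted by linarith
qed

lemma affine_garble_lower_bound:
  assumes "linear A" "A y \<le> A z" "0 \<le> s" "0 \<le> t" "s + t \<le> 1"
  shows "(k + A y) + (t * (A (1, 1) - A y) - s * A y) \<le> k + A (garble (1 - s) t z)"
proof -
  have "(1 - s - t) * A y \<le> (1 - s - t) * A z"
    using assms(2,5) by (intro mult_left_mono) auto
  then show ?thesis using assms(1) by (simp add: linear_garble algebra_simps)
qed

(* Garbling with (1 - s, t) keeps piece i above m_i + (t beta_i - s alpha_i) on K, where
   alpha_i = A_i y_i and beta_i = A_i (1, 1) - alpha_i.  As garbling does not raise the infimum of
   f over K, small garblings force t beta_i <= s alpha_i on some active piece. *)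
lemma first_order_at_minimisers:
  fixes K :: "(real \<times> real) set" and k1 k2 s t :: real and A1 A2 :: "real \<times> real \<Rightarrow> real"
    and y1 y2 :: "real \<times> real"
  defines "f \<equiv> \<lambda>y. min (k1 + A1 y) (k2 + A2 y)" and "m1 \<equiv> k1 + A1 y1" and "m2 \<equiv> k2 + A2 y2"
  assumes lin: "linear A1" "linear A2" and "compact K"
    and y1: "y1 \<in> K" "\<And>z. z \<in> K \<Longrightarrow> A1 y1 \<le> A1 z"
    and y2: "y2 \<in> K" "\<And>z. z \<in> K \<Longrightarrow> A2 y2 \<le> A2 z"
    and garble_INF: "\<And>a b. a \<in> {0..1} \<Longrightarrow> b \<in> {0..1} \<Longrightarrow>
      (INF y\<in>K. f (garble a b y)) \<le> (INF y\<in>K. f y)"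
    and "0 \<le> s" "0 \<le> t"
  shows "(m1 \<le> m2 \<and> t * (A1 (1, 1) - A1 y1) \<le> s * A1 y1) \<or>
    (m2 \<le> m1 \<and> t * (A2 (1, 1) - A2 y2) \<le> s * A2 y2)"
proof -
  define d1 d2 where "d1 = t * (A1 (1, 1) - A1 y1) - s * A1 y1"
    and "d2 = t * (A2 (1, 1) - A2 y2) - s * A2 y2"
  have "bdd_below (f ` K)"
    unfolding f_def using \<open>compact K\<close> lin
    by (intro bounded_imp_bdd_below compact_imp_bounded compact_continuous_image continuous_intros
        linear_continuous_on) (simp_all add: linear_conv_bounded_linear)
  then have INF_le: "(INF y\<in>K. f y) \<le> min m1 m2"
    using cINF_lower[of f K y1] cINF_lower[of f K y2] y1(1) y2(1) by (auto simp: f_def m1_def m2_def)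
  have "min (m1 + \<epsilon> * d1) (m2 + \<epsilon> * d2) \<le> min m1 m2" if "0 < \<epsilon>" "\<epsilon> < 1 / (s + t + 1)" for \<epsilon>
  proof -
    have step: "0 \<le> \<epsilon> * s" "0 \<le> \<epsilon> * t" "\<epsilon> * s + \<epsilon> * t \<le> 1"
      using that \<open>0 \<le> s\<close> \<open>0 \<le> t\<close> by (simp_all add: field_simps)
    have "m1 + \<epsilon> * d1 \<le> k1 + A1 (garble (1 - \<epsilon> * s) (\<epsilon> * t) z)"
      and "m2 + \<epsilon> * d2 \<le> k2 + A2 (garble (1 - \<epsilon> * s) (\<epsilon> * t) z)" if "z \<in> K" for z
      using affine_garble_lower_bound[OF lin(1) y1(2)[OF that] step, of k1]
        affine_garble_lower_bound[OF lin(2) y2(2)[OF that] step, of k2]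
      by (simp_all add: m1_def m2_def d1_def d2_def algebra_simps)
    then have "min (m1 + \<epsilon> * d1) (m2 + \<epsilon> * d2) \<le> (INF y\<in>K. f (garble (1 - \<epsilon> * s) (\<epsilon> * t) y))"
      unfolding f_def using y1(1) by (intro cINF_greatest min.mono) auto
    also have "\<dots> \<le> (INF y\<in>K. f y)"
      using step by (intro garble_INF) auto
    also have "\<dots> \<le> min m1 m2" by (rule INF_le)
    finally show ?thesis .
  qed
  then have "(m1 \<le> m2 \<and> d1 \<le> 0) \<or> (m2 \<le> m1 \<and> d2 \<le> 0)"
    by (intro min_affine_first_order[of "1 / (s + t + 1)"]) (use \<open>0 \<le> s\<close> \<open>0 \<le> t\<close> in auto)
  then show ?thesis by (simp add: d1_def d2_def)
qed

lemma exists_obedient_point: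
  fixes K :: "(real \<times> real) set" and k1 k2 :: real and A1 A2 :: "real \<times> real \<Rightarrow> real"
  defines "f \<equiv> \<lambda>y. min (k1 + A1 y) (k2 + A2 y)"
  assumes lin: "linear A1" "linear A2"
    and K: "compact K" "convex K" "K \<noteq> {}"
    and garble_INF: "\<And>a b. a \<in> {0..1} \<Longrightarrow> b \<in> {0..1} \<Longrightarrow>
      (INF y\<in>K. f (garble a b y)) \<le> (INF y\<in>K. f y)"
  shows "\<exists>y\<in>K. obedient f y"
proof -
  have cont: "continuous_on K A1" "continuous_on K A2"
    using lin linear_conv_bounded_linear linear_continuous_on by blast+
  obtain y1 where y1: "y1 \<in> K" "\<And>z. z \<in> K \<Longrightarrow> A1 y1 \<le> A1 z"
    using continuous_attains_inf[OF K(1,3) cont(1)] by blast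
  obtain y2 where y2: "y2 \<in> K" "\<And>z. z \<in> K \<Longrightarrow> A2 y2 \<le> A2 z"
    using continuous_attains_inf[OF K(1,3) cont(2)] by blast
  define \<alpha>1 \<alpha>2 where "\<alpha>1 = A1 y1" and "\<alpha>2 = A2 y2"
  define \<beta>1 \<beta>2 where "\<beta>1 = A1 (1, 1) - \<alpha>1" and "\<beta>2 = A2 (1, 1) - \<alpha>2"
  define m1 m2 where "m1 = k1 + \<alpha>1" and "m2 = k2 + \<alpha>2"
  have first_order: "(m1 \<le> m2 \<and> t * \<beta>1 \<le> s * \<alpha>1) \<or> (m2 \<le> m1 \<and> t * \<beta>2 \<le> s * \<alpha>2)"
    if "0 \<le> s" "0 \<le> t" for s t
    using first_order_at_minimisers[OF lin K(1) y1 y2 garble_INF[unfolded f_def] that]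
    by (simp add: \<alpha>1_def \<alpha>2_def \<beta>1_def \<beta>2_def m1_def m2_def)
  have obedient_at: "obedient f y"
    if "y \<in> K" "\<theta> \<in> {0..1}" "\<theta> * (k1 + A1 y) + (1 - \<theta>) * (k2 + A2 y) \<le> f y"
      "0 \<le> \<theta> * \<alpha>1 + (1 - \<theta>) * \<alpha>2" "\<theta> * \<beta>1 + (1 - \<theta>) * \<beta>2 \<le> 0" for y \<theta>
  proof -
    have "\<theta> * \<alpha>1 + (1 - \<theta>) * \<alpha>2 \<le> \<theta> * A1 y + (1 - \<theta>) * A2 y"
      using that(1,2) y1(2) y2(2) by (intro add_mono mult_left_mono) (auto simp: \<alpha>1_def \<alpha>2_def)
    then show ?thesis
      unfolding f_def using that(4,5)
      by (intro obedient_min_affine[OF lin that(2) that(3)[unfolded f_def]])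
        (auto simp: \<beta>1_def \<beta>2_def algebra_simps)
  qed
  consider "m1 < m2" | "m2 < m1" | "m1 = m2" by linarith
  then show ?thesis
  proof cases
    case 1
    then have "0 \<le> \<alpha>1" "\<beta>1 \<le> 0" using first_order[of 1 0] first_order[of 0 1] by auto
    moreover have "k1 + A1 y1 \<le> k2 + A2 y1"
      using 1 y2(2)[OF y1(1)] by (simp add: m1_def m2_def \<alpha>1_def \<alpha>2_def)
    ultimately show ?thesis using y1(1) obedient_at[of y1 1] by (auto simp: f_def)
  next
    case 2
    then have "0 \<le> \<alpha>2" "\<beta>2 \<le> 0" using first_order[of 1 0] first_order[of 0 1] by auto
    moreover have "k2 + A2 y2 \<le> k1 + A1 y2"
      using 2 y1(2)[OF y2(1)] by (simp add: m1_def m2_def \<alpha>1_def \<alpha>2_def)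
    ultimately show ?thesis using y2(1) obedient_at[of y2 0] by (auto simp: f_def)
  next
    case 3
    \<comment> \<open>Both pieces are active, so the weight must be used at a point where they agree.\<close>
    obtain \<theta> where \<theta>: "\<theta> \<in> {0..1}" "0 \<le> \<theta> * \<alpha>1 + (1 - \<theta>) * \<alpha>2" "\<theta> * \<beta>1 + (1 - \<theta>) * \<beta>2 \<le> 0"
      using exists_mix_nonneg_nonpos[of \<beta>1 \<alpha>1 \<beta>2 \<alpha>2] first_order 3 by auto
    have "k1 + A1 y1 \<le> k2 + A2 y1" "k2 + A2 y2 \<le> k1 + A1 y2"
      using 3 y1(2)[OF y2(1)] y2(2)[OF y1(1)] by (auto simp: m1_def m2_def \<alpha>1_def \<alpha>2_def)
    moreover have "continuous_on K (\<lambda>y. k1 + A1 y)" "continuous_on K (\<lambda>y. k2 + A2 y)"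
      using cont by (auto intro: continuous_on_add continuous_on_const)
    ultimately obtain y where "y \<in> K" "k1 + A1 y = k2 + A2 y"
      using exists_eq_on_connected[OF convex_connected[OF K(2)] _ _ y1(1) y2(1)] by blast
    then show ?thesis using \<theta> obedient_at[of y \<theta>] by (auto simp: f_def algebra_simps)
  qed
qed

lemma amb_exp_singleton: "is_exp M \<sigma> \<Longrightarrow> amb_exp M {\<sigma>}"
  by (auto simp: amb_exp_def fconvex2_def algebra_simps)

lemma BR_amb_singleton: "BR_amb P u M {\<sigma>} = BR_stat P u M \<sigma>"
  by (simp add: BR_amb_def BR_stat_def U_amb_def)

locale two_states_two_actions =
  fixes w1 w2 :: "'w::finite" and a1 a2 :: "'a::finite" and P :: "('w \<Rightarrow> real) set"
  assumes states: "UNIV = {w1, w2}" "w1 \<noteq> w2"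
    and actions: "UNIV = {a1, a2}" "a1 \<noteq> a2"
    and prior_set: "prior_set P"
begin

lemma sum_states: "(\<Sum>w\<in>UNIV. f w) = f w1 + f w2"
  unfolding states(1) using states(2) by simp

lemma sum_actions: "(\<Sum>x\<in>UNIV. f x) = f a1 + f a2"
  unfolding actions(1) using actions(2) by simp

lemma strat_a2: "is_strat M \<tau> \<Longrightarrow> m \<in> M \<Longrightarrow> \<tau> m a2 = 1 - \<tau> m a1"
  unfolding is_strat_def sum_actions by force

lemma strat_a1: "is_strat M \<tau> \<Longrightarrow> m \<in> M \<Longrightarrow> \<tau> m a1 \<in> {0..1}"
  unfolding is_strat_def sum_actions by (metis add_le_cancel_left add.right_neutral atLeastAtMost_iff)

definition a1_prob :: "nat set \<Rightarrow> ('w \<Rightarrow> nat \<Rightarrow> real) \<Rightarrow> (nat \<Rightarrow> 'a \<Rightarrow> real) \<Rightarrow> real \<times> real" where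
  "a1_prob M \<sigma> \<tau> = ((\<Sum>m\<in>M. \<sigma> w1 m * \<tau> m a1), (\<Sum>m\<in>M. \<sigma> w2 m * \<tau> m a1))"

lemma a1_prob_unit_square:
  assumes "is_exp M \<sigma>" "is_strat M \<tau>"
  shows "a1_prob M \<sigma> \<tau> \<in> unit_square"
proof -
  have "(\<Sum>m\<in>M. \<sigma> w m * \<tau> m a1) \<in> {0..1}" for w
  proof -
    have "0 \<le> (\<Sum>m\<in>M. \<sigma> w m * \<tau> m a1)"
      using assms strat_a1 by (intro sum_nonneg) (auto simp: is_exp_def)
    moreover have "(\<Sum>m\<in>M. \<sigma> w m * \<tau> m a1) \<le> (\<Sum>m\<in>M. \<sigma> w m)"
      using assms strat_a1 by (intro sum_mono) (auto simp: is_exp_def intro!: mult_left_le)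
    ultimately show ?thesis using assms(1) by (simp add: is_exp_def)
  qed
  then show ?thesis by (simp add: a1_prob_def)
qed

definition gain :: "('a \<Rightarrow> 'w \<Rightarrow> real) \<Rightarrow> ('w \<Rightarrow> real) \<Rightarrow> real \<times> real \<Rightarrow> real" where
  "gain u p y = p w1 * (u a1 w1 - u a2 w1) * fst y + p w2 * (u a1 w2 - u a2 w2) * snd y"

definition payoff :: "('a \<Rightarrow> 'w \<Rightarrow> real) \<Rightarrow> ('w \<Rightarrow> real) \<Rightarrow> real \<times> real \<Rightarrow> real" where
  "payoff u p y = p w1 * u a2 w1 + p w2 * u a2 w2 + gain u p y"

lemma linear_gain: "linear (gain u p)"
  by (rule linearI) (auto simp: gain_def algebra_simps)

lemma eu_eq_payoff:
  assumes "is_exp M \<sigma>" "is_strat M \<tau>"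
  shows "eu u p M \<sigma> \<tau> = payoff u p (a1_prob M \<sigma> \<tau>)"
proof -
  have per_state: "(\<Sum>m\<in>M. \<Sum>x\<in>UNIV. p w * \<sigma> w m * \<tau> m x * u x w)
      = p w * u a2 w + p w * (u a1 w - u a2 w) * (\<Sum>m\<in>M. \<sigma> w m * \<tau> m a1)" for w
  proof -
    have "(\<Sum>m\<in>M. \<Sum>x\<in>UNIV. p w * \<sigma> w m * \<tau> m x * u x w)
        = (\<Sum>m\<in>M. \<sigma> w m * (p w * u a2 w) + \<sigma> w m * \<tau> m a1 * (p w * (u a1 w - u a2 w)))"
      using assms(2) by (intro sum.cong) (auto simp: sum_actions strat_a2 algebra_simps)
    also have "\<dots> = p w * u a2 w + p w * (u a1 w - u a2 w) * (\<Sum>m\<in>M. \<sigma> w m * \<tau> m a1)"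
      using assms(1) by (simp add: sum.distrib flip: sum_distrib_right) (simp add: is_exp_def)
    finally show ?thesis .
  qed
  show ?thesis
    unfolding eu_def sum_states per_state payoff_def gain_def a1_prob_def by (simp add: algebra_simps)
qed

definition prior_of :: "real \<Rightarrow> 'w \<Rightarrow> real" where
  "prior_of \<pi> w = (if w = w1 then \<pi> else 1 - \<pi>)"

definition weights :: "real set" where
  "weights = prior_of -` P"

lemma prior_of_weight: "p \<in> P \<Longrightarrow> prior_of (p w1) = p"
proof
  fix w
  assume "p \<in> P"
  then have "p w1 + p w2 = 1" using prior_set by (simp add: prior_set_def is_prior_def sum_states)
  then show "prior_of (p w1) w = p w" using states by (auto simp: prior_of_def)
qed

lemma image_prior_of_weights: "prior_of ` weights = P"
  unfolding weights_def using prior_of_weight by (auto intro: image_eqI[OF sym])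

lemma weights_subset: "weights \<subseteq> {0..1}"
proof
  fix \<pi> assume "\<pi> \<in> weights"
  then have "is_prior (prior_of \<pi>)" using prior_set by (auto simp: weights_def prior_set_def)
  then have "0 \<le> prior_of \<pi> w1" "0 \<le> prior_of \<pi> w2" by (simp_all add: is_prior_def)
  then show "\<pi> \<in> {0..1}" using states(2) by (simp add: prior_of_def)
qed

lemma compact_weights: "compact weights"
  unfolding compact_eq_bounded_closed
proof
  show "bounded weights"
    using weights_subset bounded_subset[OF compact_imp_bounded[OF compact_Icc]] by blast
  have "continuous_on UNIV prior_of"
  proof (rule continuous_on_coordinatewise_then_product)
    fix w
    show "continuous_on UNIV (\<lambda>\<pi>. prior_of \<pi> w)"
      by (cases "w = w1") (simp_all add: prior_of_def continuous_on_diff)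
  qed
  moreover have "closed P" using prior_set by (simp add: prior_set_def)
  ultimately show "closed weights"
    unfolding weights_def by (simp add: closed_vimage continuous_on_eq_continuous_at)
qed

lemma weights_nonempty: "weights \<noteq> {}"
  using prior_set image_prior_of_weights by (auto simp: prior_set_def)

definition maxmin_payoff :: "('a \<Rightarrow> 'w \<Rightarrow> real) \<Rightarrow> real \<times> real \<Rightarrow> real" where
  "maxmin_payoff u y = min (payoff u (prior_of (Inf weights)) y) (payoff u (prior_of (Sup weights)) y)"

lemma INF_priors_payoff: "(INF p\<in>P. payoff u p y) = maxmin_payoff u y"
proof -
  define c d where "c = payoff u (prior_of 0) y" and "d = payoff u (prior_of 1) y - c"
  have affine: "payoff u (prior_of \<pi>) y = c + \<pi> * d" for \<pi>
    using states by (simp add: c_def d_def payoff_def gain_def prior_of_def algebra_simps)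
  have "(INF p\<in>prior_of ` weights. payoff u p y) = (INF \<pi>\<in>weights. c + \<pi> * d)"
    by (simp add: image_image affine)
  then have "(INF p\<in>P. payoff u p y) = (INF \<pi>\<in>weights. c + \<pi> * d)"
    by (simp only: image_prior_of_weights)
  also have "\<dots> = maxmin_payoff u y"
    by (simp add: INF_affine_compact[OF compact_weights weights_nonempty] maxmin_payoff_def affine)
  finally show ?thesis .
qed

lemma mu_eq_maxmin_payoff:
  "is_exp M \<sigma> \<Longrightarrow> is_strat M \<tau> \<Longrightarrow> mu P u M \<sigma> \<tau> = maxmin_payoff u (a1_prob M \<sigma> \<tau>)"
  by (simp add: mu_def eu_eq_payoff INF_priors_payoff)

lemma continuous_maxmin_payoff: "continuous_on S (maxmin_payoff u)"
  unfolding maxmin_payoff_def payoff_def gain_def by (intro continuous_intros)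

lemma bounded_maxmin_payoff: "S \<subseteq> unit_square \<Longrightarrow> bounded (maxmin_payoff u ` S)"
  using compact_continuous_image[OF continuous_maxmin_payoff compact_Times[OF compact_Icc compact_Icc]]
  by (meson bounded_subset compact_imp_bounded image_mono)

definition garble_strat :: "real \<Rightarrow> real \<Rightarrow> (nat \<Rightarrow> 'a \<Rightarrow> real) \<Rightarrow> nat \<Rightarrow> 'a \<Rightarrow> real" where
  "garble_strat a b \<tau> m x =
     (let q = a * \<tau> m a1 + b * (1 - \<tau> m a1) in if x = a1 then q else 1 - q)"

lemma is_strat_garble_strat:
  assumes "is_strat M \<tau>" "a \<in> {0..1}" "b \<in> {0..1}"
  shows "is_strat M (garble_strat a b \<tau>)"
  unfolding is_strat_def
proof (intro ballI conjI allI)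
  fix m x assume "m \<in> M"
  then have "a * \<tau> m a1 + b * (1 - \<tau> m a1) \<in> {0..1}"
    using assms strat_a1 by (intro mix_in_unit_interval) auto
  then show "0 \<le> garble_strat a b \<tau> m x" by (auto simp: garble_strat_def Let_def)
  show "(\<Sum>x\<in>UNIV. garble_strat a b \<tau> m x) = 1"
    using actions(2) by (simp add: sum_actions garble_strat_def Let_def)
qed

lemma a1_prob_garble_strat:
  assumes "is_exp M \<sigma>"
  shows "a1_prob M \<sigma> (garble_strat a b \<tau>) = garble a b (a1_prob M \<sigma> \<tau>)"
proof -
  have "(\<Sum>m\<in>M. \<sigma> w m * (a * \<tau> m a1 + b * (1 - \<tau> m a1)))
      = a * (\<Sum>m\<in>M. \<sigma> w m * \<tau> m a1) + b * ((\<Sum>m\<in>M. \<sigma> w m) - (\<Sum>m\<in>M. \<sigma> w m * \<tau> m a1))" for w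
    by (simp add: algebra_simps sum.distrib sum_subtractf sum_distrib_left)
  then show ?thesis
    using assms by (simp add: a1_prob_def garble_def garble_strat_def is_exp_def)
qed

(* Message 0 recommends a1 and message 1 recommends a2. *)
definition recommend :: "real \<times> real \<Rightarrow> 'w \<Rightarrow> nat \<Rightarrow> real" where
  "recommend y w m =
     (let q = if w = w1 then fst y else snd y in if m = 0 then q else if m = 1 then 1 - q else 0)"

definition obey :: "nat \<Rightarrow> 'a \<Rightarrow> real" where
  "obey m x = (if (m = 0) = (x = a1) then 1 else 0)"

lemma is_exp_recommend: "y \<in> unit_square \<Longrightarrow> is_exp {0, 1} (recommend y)"
  by (auto simp: is_exp_def recommend_def Let_def)

lemma is_strat_obey: "is_strat {0, 1} obey"
  using actions(2) by (auto simp: is_strat_def obey_def sum_actions)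

lemma a1_prob_recommend: "a1_prob {0, 1} (recommend y) \<tau> = garble (\<tau> 0 a1) (\<tau> 1 a1) y"
  using states(2) by (simp add: a1_prob_def recommend_def garble_def)

lemma mu_recommend_obey:
  assumes "y \<in> unit_square"
  shows "mu P u {0, 1} (recommend y) obey = maxmin_payoff u y"
proof -
  have "a1_prob {0, 1} (recommend y) obey = y"
    unfolding a1_prob_recommend by (simp add: obey_def garble_def)
  then show ?thesis using mu_eq_maxmin_payoff[OF is_exp_recommend[OF assms] is_strat_obey] by simp
qed

lemma obey_BR_stat:
  assumes "y \<in> unit_square" "obedient (maxmin_payoff ur) y"
  shows "obey \<in> BR_stat P ur {0, 1} (recommend y)"
  unfolding BR_stat_def
proof (intro CollectI conjI allI impI is_strat_obey)
  fix \<tau> :: "nat \<Rightarrow> 'a \<Rightarrow> real" assume "is_strat {0, 1} \<tau>"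
  then have "\<tau> 0 a1 \<in> {0..1}" "\<tau> 1 a1 \<in> {0..1}" using strat_a1 by auto
  then have "maxmin_payoff ur (garble (\<tau> 0 a1) (\<tau> 1 a1) y) \<le> maxmin_payoff ur y"
    using assms(2) by (simp add: obedient_def)
  then show "mu P ur {0, 1} (recommend y) \<tau> \<le> mu P ur {0, 1} (recommend y) obey"
    unfolding mu_recommend_obey[OF assms(1)] a1_prob_recommend[symmetric]
      mu_eq_maxmin_payoff[OF is_exp_recommend[OF assms(1)] \<open>is_strat {0, 1} \<tau>\<close>] .
qed

lemma maxmin_payoff_le_V_stat:
  assumes "y \<in> unit_square" "obedient (maxmin_payoff ur) y"
  shows "maxmin_payoff us y \<le> V_stat P us ur"
  unfolding V_stat_def
proof (rule cSup_upper)
  show "maxmin_payoff us y \<in> {mu P us M \<sigma> \<tau> |M \<sigma> \<tau>. finite M \<and> is_exp M \<sigma> \<and> \<tau> \<in> BR_stat P ur M \<sigma>}"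
    using mu_recommend_obey[OF assms(1)] obey_BR_stat[OF assms] is_exp_recommend[OF assms(1)]
    by (intro CollectI exI[of _ "{0, 1}"] exI[of _ "recommend y"] exI[of _ obey]) simp
  have "{mu P us M \<sigma> \<tau> |M \<sigma> \<tau>. finite M \<and> is_exp M \<sigma> \<and> \<tau> \<in> BR_stat P ur M \<sigma>}
      \<subseteq> maxmin_payoff us ` unit_square"
    by (auto simp: BR_stat_def mu_eq_maxmin_payoff a1_prob_unit_square)
  then show "bdd_above {mu P us M \<sigma> \<tau> |M \<sigma> \<tau>. finite M \<and> is_exp M \<sigma> \<and> \<tau> \<in> BR_stat P ur M \<sigma>}"
    using bounded_maxmin_payoff[of unit_square us]
    by (meson bdd_above_mono bounded_imp_bdd_above order_refl)
qed

lemma U_amb_eq_INF: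
  "(\<And>\<sigma>. \<sigma> \<in> \<Sigma> \<Longrightarrow> is_exp M \<sigma>) \<Longrightarrow> is_strat M \<tau> \<Longrightarrow>
    U_amb P u M \<Sigma> \<tau> = (INF \<sigma>\<in>\<Sigma>. maxmin_payoff u (a1_prob M \<sigma> \<tau>))"
  by (simp add: U_amb_def mu_eq_maxmin_payoff)

lemma convex_a1_prob_image:
  assumes "fconvex2 \<Sigma>"
  shows "convex ((\<lambda>\<sigma>. a1_prob M \<sigma> \<tau>) ` \<Sigma>)"
  unfolding convex_def
proof (intro ballI allI impI)
  fix x y :: "real \<times> real" and s t :: real
  assume "x \<in> (\<lambda>\<sigma>. a1_prob M \<sigma> \<tau>) ` \<Sigma>" "y \<in> (\<lambda>\<sigma>. a1_prob M \<sigma> \<tau>) ` \<Sigma>" "0 \<le> s" "0 \<le> t" "s + t = 1"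
  then obtain \<sigma>1 \<sigma>2 where \<sigma>: "\<sigma>1 \<in> \<Sigma>" "\<sigma>2 \<in> \<Sigma>" "x = a1_prob M \<sigma>1 \<tau>" "y = a1_prob M \<sigma>2 \<tau>"
    and t: "t = 1 - s" "s \<in> {0..1}" by auto
  define \<sigma> where "\<sigma> w m = s * \<sigma>1 w m + (1 - s) * \<sigma>2 w m" for w m
  have "\<sigma> \<in> \<Sigma>" using assms \<sigma> t unfolding fconvex2_def \<sigma>_def by auto
  moreover have "(\<Sum>m\<in>M. \<sigma> w m * \<tau> m a1)
      = s * (\<Sum>m\<in>M. \<sigma>1 w m * \<tau> m a1) + (1 - s) * (\<Sum>m\<in>M. \<sigma>2 w m * \<tau> m a1)" for w
    by (simp add: \<sigma>_def distrib_right sum.distrib sum_distrib_left mult.assoc)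
  then have "a1_prob M \<sigma> \<tau> = s *\<^sub>R x + t *\<^sub>R y"
    unfolding \<sigma> t by (simp add: a1_prob_def)
  ultimately show "s *\<^sub>R x + t *\<^sub>R y \<in> (\<lambda>\<sigma>. a1_prob M \<sigma> \<tau>) ` \<Sigma>" by (metis image_eqI)
qed

definition outcomes :: "nat set \<Rightarrow> ('w \<Rightarrow> nat \<Rightarrow> real) set \<Rightarrow> (nat \<Rightarrow> 'a \<Rightarrow> real) \<Rightarrow> (real \<times> real) set" where
  "outcomes M \<Sigma> \<tau> = closure ((\<lambda>\<sigma>. a1_prob M \<sigma> \<tau>) ` \<Sigma>)"

lemma outcomes_unit_square:
  assumes "amb_exp M \<Sigma>" "is_strat M \<tau>"
  shows "outcomes M \<Sigma> \<tau> \<subseteq> unit_square"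
proof -
  have "(\<lambda>\<sigma>. a1_prob M \<sigma> \<tau>) ` \<Sigma> \<subseteq> unit_square"
    using assms by (intro image_subsetI a1_prob_unit_square) (auto simp: amb_exp_def)
  then show ?thesis
    unfolding outcomes_def by (intro closure_minimal) (auto intro: compact_imp_closed compact_Times)
qed

lemma outcomes_compact_convex:
  assumes "amb_exp M \<Sigma>" "is_strat M \<tau>"
  shows "compact (outcomes M \<Sigma> \<tau>)" "convex (outcomes M \<Sigma> \<tau>)" "outcomes M \<Sigma> \<tau> \<noteq> {}"
proof -
  have "bounded (outcomes M \<Sigma> \<tau>)"
    using compact_imp_bounded[OF compact_Times[OF compact_Icc compact_Icc]]
      outcomes_unit_square[OF assms] by (rule bounded_subset)
  then show "compact (outcomes M \<Sigma> \<tau>)" by (simp add: compact_eq_bounded_closed outcomes_def)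
  show "convex (outcomes M \<Sigma> \<tau>)"
    using assms(1) convex_a1_prob_image by (simp add: outcomes_def amb_exp_def)
  show "outcomes M \<Sigma> \<tau> \<noteq> {}"
    using assms(1) by (simp add: outcomes_def amb_exp_def)
qed

lemma INF_outcomes_garble:
  assumes "amb_exp M \<Sigma>" "is_strat M \<tau>" "a \<in> {0..1}" "b \<in> {0..1}"
  shows "(INF y\<in>outcomes M \<Sigma> \<tau>. maxmin_payoff u (garble a b y))
    = (INF \<sigma>\<in>\<Sigma>. maxmin_payoff u (garble a b (a1_prob M \<sigma> \<tau>)))"
proof -
  have "garble a b ` outcomes M \<Sigma> \<tau> \<subseteq> unit_square"
    using outcomes_unit_square[OF assms(1,2)] assms(3,4) by (intro image_subsetI garble_unit_square) auto
  then have "bdd_below ((\<lambda>y. maxmin_payoff u (garble a b y)) ` outcomes M \<Sigma> \<tau>)"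
    using bounded_maxmin_payoff by (metis bounded_imp_bdd_below image_image)
  then show ?thesis
    using assms(1) unfolding outcomes_def
    by (subst INF_closure_continuous)
      (auto simp: image_image amb_exp_def
        intro: continuous_on_compose2[OF continuous_maxmin_payoff continuous_on_garble])
qed

lemma U_amb_eq_INF_outcomes:
  assumes "amb_exp M \<Sigma>" "is_strat M \<tau>"
  shows "U_amb P u M \<Sigma> \<tau> = (INF y\<in>outcomes M \<Sigma> \<tau>. maxmin_payoff u y)"
  using INF_outcomes_garble[OF assms, of 1 0 u] assms by (simp add: U_amb_eq_INF amb_exp_def)

lemma BR_amb_garble_INF:
  assumes "amb_exp M \<Sigma>" "\<tau> \<in> BR_amb P ur M \<Sigma>" "a \<in> {0..1}" "b \<in> {0..1}"
  shows "(INF y\<in>outcomes M \<Sigma> \<tau>. maxmin_payoff ur (garble a b y))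
    \<le> (INF y\<in>outcomes M \<Sigma> \<tau>. maxmin_payoff ur y)"
proof -
  have \<tau>: "is_strat M \<tau>" using assms(2) by (simp add: BR_amb_def)
  then have garbled: "is_strat M (garble_strat a b \<tau>)" using assms(3,4) by (rule is_strat_garble_strat)
  then have "U_amb P ur M \<Sigma> (garble_strat a b \<tau>) \<le> U_amb P ur M \<Sigma> \<tau>"
    using assms(2) by (simp add: BR_amb_def)
  then show ?thesis
    using assms(1) garbled
    by (simp add: INF_outcomes_garble[OF assms(1) \<tau> assms(3,4)] U_amb_eq_INF_outcomes[OF assms(1) \<tau>]
        U_amb_eq_INF a1_prob_garble_strat amb_exp_def)
qed

lemma ambiguous_BR_obedient_point:
  assumes \<Sigma>: "amb_exp M \<Sigma>" and BR: "\<tau> \<in> BR_amb P ur M \<Sigma>"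
  shows "\<exists>y\<in>unit_square. obedient (maxmin_payoff ur) y \<and> U_amb P us M \<Sigma> \<tau> \<le> maxmin_payoff us y"
proof -
  have \<tau>: "is_strat M \<tau>" using BR by (simp add: BR_amb_def)
  have "\<exists>y\<in>outcomes M \<Sigma> \<tau>. obedient (maxmin_payoff ur) y"
    using BR_amb_garble_INF[OF \<Sigma> BR] unfolding maxmin_payoff_def[abs_def] payoff_def
    by (rule exists_obedient_point[OF linear_gain linear_gain outcomes_compact_convex[OF \<Sigma> \<tau>]])
  then obtain y where y: "y \<in> outcomes M \<Sigma> \<tau>" "obedient (maxmin_payoff ur) y" by blast
  have "U_amb P us M \<Sigma> \<tau> \<le> maxmin_payoff us y"
    unfolding U_amb_eq_INF_outcomes[OF \<Sigma> \<tau>]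
    using y(1) outcomes_unit_square[OF \<Sigma> \<tau>] bounded_maxmin_payoff
    by (intro cINF_lower bounded_imp_bdd_below) auto
  then show ?thesis using y outcomes_unit_square[OF \<Sigma> \<tau>] by blast
qed

lemma exists_obedient_in_unit_square: "\<exists>y\<in>unit_square. obedient (maxmin_payoff ur) y"
proof -
  have "unit_square \<noteq> {}" by auto
  then obtain y where "y \<in> unit_square"
    and max: "\<forall>z\<in>unit_square. maxmin_payoff ur z \<le> maxmin_payoff ur y"
    using continuous_attains_sup[OF compact_Times[OF compact_Icc compact_Icc] _ continuous_maxmin_payoff]
    by blast
  then have "obedient (maxmin_payoff ur) y"
    unfolding obedient_def using garble_unit_square[OF \<open>y \<in> unit_square\<close>] by blast
  with \<open>y \<in> unit_square\<close> show ?thesis by blast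
qed

lemma V_amb_le_V_stat:
  fixes us ur :: "'a \<Rightarrow> 'w \<Rightarrow> real"
  shows "V_amb P us ur \<le> V_stat P us ur"
  unfolding V_amb_def
proof (rule cSup_least)
  obtain y where y: "y \<in> unit_square" "obedient (maxmin_payoff ur) y"
    using exists_obedient_in_unit_square by blast
  have "amb_exp {0, 1} {recommend y}" by (rule amb_exp_singleton[OF is_exp_recommend[OF y(1)]])
  moreover have "obey \<in> BR_amb P ur {0, 1} {recommend y}"
    unfolding BR_amb_singleton by (rule obey_BR_stat[OF y])
  ultimately have "U_amb P us {0, 1} {recommend y} obey
      \<in> {U_amb P us M \<Sigma> \<tau> |M \<Sigma> \<tau>. finite M \<and> amb_exp M \<Sigma> \<and> \<tau> \<in> BR_amb P ur M \<Sigma>}"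
    by (intro CollectI exI[of _ "{0, 1}"] exI[of _ "{recommend y}"] exI[of _ obey]) simp
  then show "{U_amb P us M \<Sigma> \<tau> |M \<Sigma> \<tau>. finite M \<and> amb_exp M \<Sigma> \<and> \<tau> \<in> BR_amb P ur M \<Sigma>} \<noteq> {}"
    by blast
next
  fix x assume "x \<in> {U_amb P us M \<Sigma> \<tau> |M \<Sigma> \<tau>. finite M \<and> amb_exp M \<Sigma> \<and> \<tau> \<in> BR_amb P ur M \<Sigma>}"
  then obtain M \<Sigma> \<tau> where "x = U_amb P us M \<Sigma> \<tau>" "amb_exp M \<Sigma>" "\<tau> \<in> BR_amb P ur M \<Sigma>" by blast
  then obtain y where y: "y \<in> unit_square" "obedient (maxmin_payoff ur) y" and "x \<le> maxmin_payoff us y"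
    using ambiguous_BR_obedient_point by blast
  note \<open>x \<le> maxmin_payoff us y\<close>
  also have "\<dots> \<le> V_stat P us ur" using y by (rule maxmin_payoff_le_V_stat)
  finally show "x \<le> V_stat P us ur" .
qed

end

theorem theorem1:
  fixes P :: "('w::finite \<Rightarrow> real) set"
    and us ur :: "'a::finite \<Rightarrow> 'w \<Rightarrow> real"
  assumes "CARD('w) = 2" and "CARD('a) = 2"
    and "prior_set P"
  shows "V_amb P us ur \<le> V_stat P us ur"
proof -
  obtain w1 w2 :: 'w where "UNIV = {w1, w2}" "w1 \<noteq> w2"
    using assms(1) card_2_iff by metis
  moreover obtain a1 a2 :: 'a where "UNIV = {a1, a2}" "a1 \<noteq> a2"
    using assms(2) card_2_iff by metis
  ultimately interpret two_states_two_actions w1 w2 a1 a2 P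
    using assms(3) by unfold_locales
  show ?thesis by (rule V_amb_le_V_stat)
qed

end
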